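(* For $\boldsymbol\alpha\in\mathbb C^{n+1}$ with $\alpha_1^2+\cdots+\alpha_{n+1}^2=0$, integers $\ell\ge1$ and $k=1,\dots,n+1$, $$\mathbf A_k(\boldsymbol\alpha\cdot\mathbf x)^\ell=\hbar\,\ell\,\Big(\frac{2(\ell-1)+n-1}{2\ell+n-1}\Big)^{1/2}\alpha_k\,(\boldsymbol\alpha\cdot\mathbf x)^{\ell-1},$$ where $(\boldsymbol\alpha\cdot\mathbf x)=\sum_j\alpha_jx_j$ is regarded as a function on $S^n$; and $\mathbf A_k$ annihilates constants. Consequently $\mathbf A_k$ maps the space $\mathcal V_\ell$ of spherical harmonics of degree $\ell$ into $\mathcal V_{\ell-1}$ for $\ell>0$ and $\mathbf A_k\mathcal V_0=0$.
   Context: $n\in\{2,3,5\}$, $\hbar>0$. $\mathcal V_\ell$ is the space of restrictions to $S^n$ of harmonic homogeneous polynomials of degree $\ell$ on $\mathbb R^{n+1}$. $\Delta_{S^n}$ is the normalized spherical Laplacian on $L^2(S^n)$, the self-adjoint operator acting on $\mathcal V_k$ by the scalar $(k+\frac{n-1}{2})^2$. Define by functional calculus $\mathbf M=\sqrt{\tfrac{2}{n-1}}\,\Delta_{S^n}^{1/4}$ and $\mathbf N=\hbar(\sqrt{\Delta_{S^n}}-\tfrac{n-1}{2})$. Let $\tilde{\mathbf L}_{kj}$ be the restriction to $S^n$ of the angular momentum vector field $y_k\partial_{y_j}-y_j\partial_{y_k}$ on $\mathbb R^{n+1}$, and let $\mathbf E_k=\sum_{j=1}^{n+1}(-i x_j)(-i\hbar\tilde{\mathbf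 L}_{kj})+x_k\mathbf N$, where $x_j$ denotes multiplication by the $j$-th coordinate on $S^n$. Set $\mathbf A_k=\mathbf M\mathbf E_k\mathbf M^{-1}$. *)

theory Defs
  imports "HOL-Analysis.Analysis"
begin

text \<open>Points of R^(n+1) are vectors real^'m with CARD('m) = n+1.
 Functions on S^n are represented as functions real^'m => complex; only their
 values on the unit sphere matter.  Elements of the spaces V_l are normalised
 to vanish off the sphere so that harmonic decompositions are unique.\<close>

definition dimS :: "'m::finite itself \<Rightarrow> real" where
  "dimS _ = real CARD('m) - 1"

definition restr :: "(real^'m \<Rightarrow> complex) \<Rightarrow> real^'m \<Rightarrow> complex" where
  "restr p = (\<lambda>y. if norm y = 1 then p y else 0)"

definition homog_poly :: "nat \<Rightarrow> (real^'m \<Rightarrow> complex) \<Rightarrow> bool" where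
  "homog_poly l p \<longleftrightarrow> (\<exists>c :: ('m \<Rightarrow> nat) \<Rightarrow> complex.
      \<forall>y. p y = (\<Sum>m\<in>{m. sum m UNIV = l}. c m * (\<Prod>i\<in>UNIV. complex_of_real ((y$i) ^ m i))))"

definition second_partial :: "(real^'m \<Rightarrow> complex) \<Rightarrow> 'm \<Rightarrow> real^'m \<Rightarrow> complex" where
  "second_partial p i y =
     vector_derivative (\<lambda>s. vector_derivative (\<lambda>t. p (y + t *\<^sub>R axis i 1)) (at s)) (at 0)"

definition laplacian :: "(real^'m \<Rightarrow> complex) \<Rightarrow> real^'m \<Rightarrow> complex" where
  "laplacian p y = (\<Sum>i\<in>UNIV. second_partial p i y)"

definition harmonic_homog :: "nat \<Rightarrow> (real^'m \<Rightarrow> complex) \<Rightarrow> bool" where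
  "harmonic_homog l p \<longleftrightarrow> homog_poly l p \<and> (\<forall>y. laplacian p y = 0)"

definition SH :: "nat \<Rightarrow> (real^'m \<Rightarrow> complex) set" where
  "SH l = {restr p | p. harmonic_homog l p}"

definition is_harm_decomp :: "(real^'m \<Rightarrow> complex) \<Rightarrow> (nat \<Rightarrow> real^'m \<Rightarrow> complex) \<Rightarrow> bool" where
  "is_harm_decomp f c \<longleftrightarrow> (\<forall>k. c k \<in> SH k) \<and> finite {k. c k \<noteq> (\<lambda>_. 0)} \<and>
     (\<forall>y. norm y = 1 \<longrightarrow> f y = (\<Sum>k\<in>{k. c k \<noteq> (\<lambda>_. 0)}. c k y))"

definition harm_comp :: "(real^'m \<Rightarrow> complex) \<Rightarrow> nat \<Rightarrow> real^'m \<Rightarrow> complex" where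
  "harm_comp f = (THE c. is_harm_decomp f c)"

text \<open>Functional calculus of the normalised spherical Laplacian, which acts on V_k
  by the scalar (k + (n-1)/2)^2; phi(Delta) acts on V_k by phi((k+(n-1)/2)^2).\<close>
definition fcalc :: "(real \<Rightarrow> complex) \<Rightarrow> (real^'m \<Rightarrow> complex) \<Rightarrow> real^'m \<Rightarrow> complex" where
  "fcalc phi f = (\<lambda>y. \<Sum>k\<in>{k. harm_comp f k \<noteq> (\<lambda>_. 0)}.
      phi ((real k + (dimS TYPE('m) - 1) / 2)\<^sup>2) * harm_comp f k y)"

definition opM :: "(real^'m \<Rightarrow> complex) \<Rightarrow> real^'m \<Rightarrow> complex" where
  "opM = fcalc (\<lambda>lam. complex_of_real (sqrt (2 / (dimS TYPE('m) - 1)) * lam powr (1/4)))"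

definition opMinv :: "(real^'m \<Rightarrow> complex) \<Rightarrow> real^'m \<Rightarrow> complex" where
  "opMinv = fcalc (\<lambda>lam. complex_of_real (1 / (sqrt (2 / (dimS TYPE('m) - 1)) * lam powr (1/4))))"

definition opN :: "real \<Rightarrow> (real^'m \<Rightarrow> complex) \<Rightarrow> real^'m \<Rightarrow> complex" where
  "opN hbar = fcalc (\<lambda>lam. complex_of_real (hbar * (sqrt lam - (dimS TYPE('m) - 1) / 2)))"

text \<open>Restriction to the sphere of the vector field y_k d/dy_j - y_j d/dy_k, acting on
  a function on the sphere (differentiate its 0-homogeneous extension along the field).\<close>
definition Ltil :: "'m \<Rightarrow> 'm \<Rightarrow> (real^'m \<Rightarrow> complex) \<Rightarrow> real^'m \<Rightarrow> complex" where
  "Ltil k j f y =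
     (let v = (\<chi> i. (if i = j then y$k else 0) - (if i = k then y$j else 0)) :: real^'m
      in vector_derivative (\<lambda>t. f ((1 / norm (y + t *\<^sub>R v)) *\<^sub>R (y + t *\<^sub>R v))) (at 0))"

definition opE :: "real \<Rightarrow> 'm \<Rightarrow> (real^'m \<Rightarrow> complex) \<Rightarrow> real^'m \<Rightarrow> complex" where
  "opE hbar k f = (\<lambda>y. (\<Sum>j\<in>UNIV. (- \<i> * complex_of_real (y$j)) *
        (- \<i> * complex_of_real hbar * Ltil k j f y))
      + complex_of_real (y$k) * opN hbar f y)"

definition opA :: "real \<Rightarrow> 'm \<Rightarrow> (real^'m \<Rightarrow> complex) \<Rightarrow> real^'m \<Rightarrow> complex" where
  "opA hbar k f = opM (opE hbar k (opMinv f))"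

end

theory Submission
  imports Defs
begin

text \<open>Every function in question is the restriction to the sphere of a harmonic polynomial.
  Harmonic polynomials of distinct degrees are linearly independent on the sphere, because
  \<open>\<Sum>\<^sub>k\<^sub>,\<^sub>j L\<^sub>k\<^sub>j\<^sup>2\<close> (which only sees values on the sphere) acts on a harmonic polynomial
  of degree \<open>l\<close> by the scalar \<open>-2l(l+n-1)\<close>, and these scalars are distinct. Hence a harmonic
  polynomial of degree \<open>l\<close> is its own harmonic decomposition, and \<open>M\<close>, \<open>M\<^sup>-\<^sup>1\<close>, \<open>N\<close> act on it
  by their symbols at \<open>l\<close>. On such a \<open>p\<close> one computes \<open>E\<^sub>k p = \<hbar> \<partial>\<^sub>k p\<close> on the sphere: the term
  \<open>x\<^sub>k N p = \<hbar> l x\<^sub>k p\<close> cancels the radial part \<open>x\<^sub>k (x\<cdot>\<nabla>) p\<close> of the angular momentum sum, and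
  \<open>\<partial>\<^sub>k p\<close> is harmonic of degree \<open>l-1\<close>. So \<open>A\<^sub>k p = \<hbar> (m(l-1)/m(l)) \<partial>\<^sub>k p\<close>, \<open>m\<close> being the
  symbol of \<open>M\<close>. For \<open>p = (\<alpha>\<cdot>x)\<^sup>l\<close> with \<open>\<alpha>\<close> isotropic, \<open>\<Delta>p = l(l-1)(\<Sum> \<alpha>\<^sub>j\<^sup>2)(\<alpha>\<cdot>x)\<^sup>l\<^sup>-\<^sup>2 = 0\<close>
  and \<open>\<partial>\<^sub>k p = l \<alpha>\<^sub>k (\<alpha>\<cdot>x)\<^sup>l\<^sup>-\<^sup>1\<close>.\<close>

subsection \<open>Polynomials as lists of terms\<close>

text \<open>A term \<open>(c, m)\<close> stands for \<open>c x\<^sup>m\<close>; lists are not normalised, so only \<open>peval\<close> is meaningful.\<close>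

type_synonym 'm poly_terms = "(complex \<times> ('m \<Rightarrow> nat)) list"

definition monomial :: "('m::finite \<Rightarrow> nat) \<Rightarrow> real^'m \<Rightarrow> complex" where
  "monomial m y = (\<Prod>i\<in>UNIV. complex_of_real ((y$i) ^ m i))"

definition peval :: "'m::finite poly_terms \<Rightarrow> real^'m \<Rightarrow> complex" where
  "peval L y = (\<Sum>(c,m)\<leftarrow>L. c * monomial m y)"

definition pdiff :: "'m::finite \<Rightarrow> 'm poly_terms \<Rightarrow> 'm poly_terms" where
  "pdiff i L = concat (map (\<lambda>(c,m). if m i = 0 then [] else [(c * of_nat (m i), m(i := m i - 1))]) L)"

definition psmult :: "complex \<Rightarrow> 'm::finite poly_terms \<Rightarrow> 'm poly_terms" where
  "psmult a L = map (\<lambda>(c,m). (a * c, m)) L"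

definition pmult_coord :: "'m::finite \<Rightarrow> 'm poly_terms \<Rightarrow> 'm poly_terms" where
  "pmult_coord k L = map (\<lambda>(c,m). (c, m(k := Suc (m k)))) L"

definition homogeneous_terms :: "nat \<Rightarrow> 'm::finite poly_terms \<Rightarrow> bool" where
  "homogeneous_terms l L \<longleftrightarrow> (\<forall>(c,m)\<in>set L. sum m UNIV = l)"

lemma peval_Nil [simp]: "peval [] y = 0"
  by (simp add: peval_def)

lemma peval_Cons [simp]: "peval ((c,m) # L) y = c * monomial m y + peval L y"
  by (simp add: peval_def)

lemma peval_append [simp]: "peval (A @ B) y = peval A y + peval B y"
  by (simp add: peval_def)

lemma peval_concat: "peval (concat (map Ls xs)) y = (\<Sum>x\<leftarrow>xs. peval (Ls x) y)"
  by (induction xs) auto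

lemma pdiff_Nil [simp]: "pdiff i [] = []"
  by (simp add: pdiff_def)

lemma pdiff_Cons [simp]:
  "pdiff i ((c,m) # L) = (if m i = 0 then [] else [(c * of_nat (m i), m(i := m i - 1))]) @ pdiff i L"
  by (simp add: pdiff_def)

lemma pdiff_append [simp]: "pdiff i (A @ B) = pdiff i A @ pdiff i B"
  by (simp add: pdiff_def)

lemma pdiff_concat: "pdiff k (concat (map F xs)) = concat (map (\<lambda>x. pdiff k (F x)) xs)"
  by (induction xs) auto

lemma psmult_Nil [simp]: "psmult a [] = []"
  by (simp add: psmult_def)

lemma psmult_Cons [simp]: "psmult a ((c,m) # L) = (a * c, m) # psmult a L"
  by (simp add: psmult_def)

lemma psmult_append [simp]: "psmult a (A @ B) = psmult a A @ psmult a B"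
  by (simp add: psmult_def)

lemma peval_psmult [simp]: "peval (psmult a L) y = a * peval L y"
  by (induction L) (auto simp: algebra_simps)

lemma pmult_coord_Nil [simp]: "pmult_coord k [] = []"
  by (simp add: pmult_coord_def)

lemma pmult_coord_Cons [simp]: "pmult_coord k ((c,m) # L) = (c, m(k := Suc (m k))) # pmult_coord k L"
  by (simp add: pmult_coord_def)

lemma pmult_coord_append [simp]: "pmult_coord k (A @ B) = pmult_coord k A @ pmult_coord k B"
  by (simp add: pmult_coord_def)

lemma monomial_zero [simp]: "monomial (\<lambda>_. 0) y = 1"
  by (simp add: monomial_def)

lemma monomial_add: "monomial (\<lambda>i. m i + m' i) y = monomial m y * monomial m' y"
  unfolding monomial_def by (simp add: power_add prod.distrib)

lemma monomial_split:
  "monomial m y = complex_of_real ((y$k) ^ m k) * (\<Prod>i\<in>UNIV - {k}. complex_of_real ((y$i) ^ m i))"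
  unfolding monomial_def by (subst prod.remove[of UNIV k]) auto

lemma monomial_upd:
  "monomial (m(k := a)) y = complex_of_real ((y$k) ^ a) * (\<Prod>i\<in>UNIV - {k}. complex_of_real ((y$i) ^ m i))"
  unfolding monomial_split[of _ _ k] by (auto intro!: prod.cong)

lemma monomial_Suc: "monomial (m(k := Suc (m k))) y = complex_of_real (y$k) * monomial m y"
  unfolding monomial_upd monomial_split[of m y k] by simp

lemma monomial_pred: "m k \<noteq> 0 \<Longrightarrow> complex_of_real (y$k) * monomial (m(k := m k - 1)) y = monomial m y"
  using monomial_Suc[of "m(k := m k - 1)" k y] by simp

lemma peval_pmult_coord [simp]: "peval (pmult_coord k L) y = complex_of_real (y$k) * peval L y"
  by (induction L) (auto simp: monomial_Suc algebra_simps)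

lemma peval_pdiff_psmult: "peval (pdiff i (psmult a L)) y = a * peval (pdiff i L) y"
  by (induction L) (auto simp: algebra_simps)

lemma homogeneous_terms_Nil [simp]: "homogeneous_terms l []"
  by (simp add: homogeneous_terms_def)

lemma homogeneous_terms_Cons [simp]:
  "homogeneous_terms l ((c,m) # L) \<longleftrightarrow> sum m UNIV = l \<and> homogeneous_terms l L"
  by (simp add: homogeneous_terms_def)

lemma homogeneous_terms_append [simp]:
  "homogeneous_terms l (A @ B) \<longleftrightarrow> homogeneous_terms l A \<and> homogeneous_terms l B"
  by (auto simp: homogeneous_terms_def)

lemma homogeneous_terms_psmult: "homogeneous_terms l L \<Longrightarrow> homogeneous_terms l (psmult a L)"
  by (induction L) auto

subsection \<open>Formal and analytic derivatives\<close>

lemma has_derivative_monomial: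
  "(monomial m has_derivative (\<lambda>h. \<Sum>i\<in>UNIV. complex_of_real (h$i) * peval (pdiff i [(1,m)]) y)) (at y)"
proof -
  have coord: "((\<lambda>y. complex_of_real ((y$i) ^ m i)) has_derivative
      (\<lambda>h. complex_of_real (real (m i) * (y$i) ^ (m i - 1) * h$i))) (at y)" for i
    by (auto intro!: derivative_eq_intros bounded_linear_imp_has_derivative bounded_linear_vec_nth)
  have summand: "complex_of_real (real (m i) * (y$i) ^ (m i - 1) * h$i)
      * (\<Prod>j\<in>UNIV - {i}. complex_of_real ((y$j) ^ m j)) = complex_of_real (h$i) * peval (pdiff i [(1,m)]) y"
    for i h
    by (cases "m i = 0") (simp_all add: monomial_upd)
  have "(monomial m has_derivative (\<lambda>h. \<Sum>i\<in>UNIV. complex_of_real (real (m i) * (y$i) ^ (m i - 1) * h$i)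
      * (\<Prod>j\<in>UNIV - {i}. complex_of_real ((y$j) ^ m j)))) (at y)"
    unfolding monomial_def[abs_def] by (rule has_derivative_prod, rule coord)
  then show ?thesis
    unfolding summand .
qed

lemma has_derivative_peval:
  "(peval L has_derivative (\<lambda>h. \<Sum>i\<in>UNIV. complex_of_real (h$i) * peval (pdiff i L) y)) (at y)"
proof (induction L)
  case Nil
  then show ?case by (simp add: peval_def[abs_def])
next
  case (Cons a L)
  obtain c m where a: "a = (c,m)" by fastforce
  have "((\<lambda>y. c * monomial m y + peval L y) has_derivative
     (\<lambda>h. c * (\<Sum>i\<in>UNIV. complex_of_real (h$i) * peval (pdiff i [(1,m)]) y) +
          (\<Sum>i\<in>UNIV. complex_of_real (h$i) * peval (pdiff i L) y))) (at y)"
    by (intro has_derivative_add has_derivative_mult_right has_derivative_monomial Cons.IH)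
  moreover have "(\<lambda>h. c * (\<Sum>i\<in>UNIV. complex_of_real (h$i) * peval (pdiff i [(1,m)]) y) +
          (\<Sum>i\<in>UNIV. complex_of_real (h$i) * peval (pdiff i L) y)) =
     (\<lambda>h. \<Sum>i\<in>UNIV. complex_of_real (h$i) * peval (pdiff i (a # L)) y)"
    by (auto simp: a sum_distrib_left sum.distrib[symmetric] algebra_simps intro!: ext sum.cong)
  ultimately show ?case by (simp add: a fun_eq_iff)
qed

lemma has_vector_derivative_peval_line:
  "((\<lambda>t. peval L (y + t *\<^sub>R axis i 1)) has_vector_derivative peval (pdiff i L) (y + s *\<^sub>R axis i 1)) (at s)"
proof -
  have "((\<lambda>t. y + t *\<^sub>R axis i 1) has_derivative (\<lambda>h. h *\<^sub>R axis i 1)) (at s)"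
    by (auto intro!: derivative_eq_intros)
  from has_derivative_compose[OF this has_derivative_peval]
  have "((\<lambda>t. peval L (y + t *\<^sub>R axis i 1)) has_derivative
     (\<lambda>h. \<Sum>j\<in>UNIV. complex_of_real ((h *\<^sub>R axis i (1::real))$j) * peval (pdiff j L) (y + s *\<^sub>R axis i 1))) (at s)"
    by simp
  moreover have "(\<Sum>j\<in>UNIV. complex_of_real ((h *\<^sub>R axis i (1::real))$j) * peval (pdiff j L) z)
     = h *\<^sub>R peval (pdiff i L) z" for h :: real and z
  proof -
    have "complex_of_real ((h *\<^sub>R axis i (1::real))$j) * peval (pdiff j L) z =
       (if j = i then h *\<^sub>R peval (pdiff i L) z else 0)" for j
      by (simp add: axis_def scaleR_conv_of_real[where 'a = complex])
    then show ?thesis by simp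
  qed
  ultimately show ?thesis unfolding has_vector_derivative_def by simp
qed

definition partial_deriv :: "(real^'m \<Rightarrow> complex) \<Rightarrow> 'm \<Rightarrow> real^'m \<Rightarrow> complex" where
  "partial_deriv f i y = vector_derivative (\<lambda>t. f (y + t *\<^sub>R axis i 1)) (at 0)"

lemma partial_deriv_peval: "partial_deriv (peval L) i y = peval (pdiff i L) y"
  unfolding partial_deriv_def using vector_derivative_at[OF has_vector_derivative_peval_line[of L y i 0]] by simp

lemma peval_pdiff_cong: "(\<And>z. peval A z = peval B z) \<Longrightarrow> peval (pdiff i A) y = peval (pdiff i B) y"
  by (metis partial_deriv_peval ext)

lemma second_partial_peval: "second_partial (peval L) i y = peval (pdiff i (pdiff i L)) y"
proof -
  have "vector_derivative (\<lambda>t. peval L (y + t *\<^sub>R axis i 1)) (at s) = peval (pdiff i L) (y + s *\<^sub>R axis i 1)" for s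
    by (rule vector_derivative_at[OF has_vector_derivative_peval_line])
  then show ?thesis
    unfolding second_partial_def by (simp add: partial_deriv_peval[unfolded partial_deriv_def])
qed

lemma laplacian_peval: "laplacian (peval L) y = (\<Sum>i\<in>UNIV. peval (pdiff i (pdiff i L)) y)"
  unfolding laplacian_def second_partial_peval ..

lemma sum_fun_upd_UNIV:
  "sum ((m::'m::finite \<Rightarrow> nat)(k := a)) UNIV + m k = sum m UNIV + a"
proof -
  have "sum (m(k := a)) UNIV = a + sum m (UNIV - {k})"
    by (subst sum.remove[of UNIV k]) (auto intro!: sum.cong)
  moreover have "sum m UNIV = m k + sum m (UNIV - {k})"
    by (subst sum.remove[of UNIV k]) auto
  ultimately show ?thesis by simp
qed

lemma homogeneous_terms_pdiff: "homogeneous_terms l L \<Longrightarrow> homogeneous_terms (l - 1) (pdiff i L)"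
proof (induction L)
  case (Cons a L)
  obtain c m where a: "a = (c,m)" by fastforce
  have "m i \<noteq> 0 \<Longrightarrow> sum (m(i := m i - 1)) UNIV = sum m UNIV - 1"
    using sum_fun_upd_UNIV[of m i "m i - 1"] by simp
  then show ?case using Cons a by (auto simp del: fun_upd_apply)
qed simp

lemma pdiff_pdiff_commute: "peval (pdiff i (pdiff j L)) y = peval (pdiff j (pdiff i L)) y"
proof (induction L)
  case (Cons a L)
  obtain c m where a: "a = (c,m)" by fastforce
  have "peval (pdiff i (pdiff j [(c,m)])) y = peval (pdiff j (pdiff i [(c,m)])) y"
    by (cases "i = j") (auto simp: fun_upd_twist algebra_simps)
  then show ?case using Cons a by simp
qed simp

lemma peval_pdiff_pmult_coord:
  "peval (pdiff j (pmult_coord k L)) y =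
     (if j = k then peval L y else 0) + complex_of_real (y$k) * peval (pdiff j L) y"
proof (induction L)
  case (Cons a L)
  obtain c m where a: "a = (c,m)" by fastforce
  have "peval (pdiff j [(c, m(k := Suc (m k)))]) y =
      (if j = k then c * monomial m y else 0) + complex_of_real (y$k) * peval (pdiff j [(c,m)]) y"
  proof (cases "j = k")
    case True
    then show ?thesis
      using monomial_pred[of m k y] by (cases "m k = 0") (auto simp: fun_upd_idem algebra_simps)
  next
    case False
    then have "monomial (m(k := Suc (m k), j := m j - 1)) y = complex_of_real (y$k) * monomial (m(j := m j - 1)) y"
      using monomial_Suc[of "m(j := m j - 1)" k y] by (simp add: fun_upd_twist)
    then show ?thesis using False by auto
  qed
  then show ?case using Cons a by (simp add: algebra_simps)
qed simp

lemma euler_identity: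
  assumes "homogeneous_terms l L"
  shows "(\<Sum>j\<in>UNIV. complex_of_real (y$j) * peval (pdiff j L) y) = of_nat l * peval L y"
  using assms
proof (induction L)
  case (Cons a L)
  obtain c m where a: "a = (c,m)" by fastforce
  have "complex_of_real (y$j) * peval (pdiff j [(c,m)]) y = of_nat (m j) * (c * monomial m y)" for j
    using monomial_pred[of m j y] by (cases "m j = 0") (auto simp: algebra_simps)
  then have "(\<Sum>j\<in>UNIV. complex_of_real (y$j) * peval (pdiff j [(c,m)]) y) = of_nat (sum m UNIV) * (c * monomial m y)"
    by (simp add: sum_distrib_right)
  then show ?case
    using Cons a by (simp add: distrib_left sum.distrib flip: of_nat_sum)
qed simp

definition harmonic_terms :: "nat \<Rightarrow> 'm::finite poly_terms \<Rightarrow> bool" where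
  "harmonic_terms l L \<longleftrightarrow> homogeneous_terms l L \<and> (\<forall>y. (\<Sum>i\<in>UNIV. peval (pdiff i (pdiff i L)) y) = 0)"

lemma harmonic_terms_Nil: "harmonic_terms l []"
  by (simp add: harmonic_terms_def)

lemma harmonic_terms_append: "harmonic_terms l A \<Longrightarrow> harmonic_terms l B \<Longrightarrow> harmonic_terms l (A @ B)"
  by (simp add: harmonic_terms_def sum.distrib)

lemma harmonic_terms_psmult:
  assumes L: "harmonic_terms l L"
  shows "harmonic_terms l (psmult a L)"
proof -
  have "peval (pdiff i (pdiff i (psmult a L))) y = a * peval (pdiff i (pdiff i L)) y" for i y
  proof -
    have "peval (pdiff i (pdiff i (psmult a L))) y = peval (pdiff i (psmult a (pdiff i L))) y"
      by (rule peval_pdiff_cong) (simp add: peval_pdiff_psmult)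
    then show ?thesis by (simp add: peval_pdiff_psmult)
  qed
  then show ?thesis
    using L by (simp add: harmonic_terms_def homogeneous_terms_psmult flip: sum_distrib_left)
qed

text \<open>Derivatives commute with the Laplacian, so they preserve harmonicity.\<close>

lemma harmonic_terms_pdiff:
  fixes L :: "'m::finite poly_terms"
  assumes L: "harmonic_terms l L"
  shows "harmonic_terms (l - 1) (pdiff k L)"
proof -
  have commute: "peval (pdiff i (pdiff i (pdiff k L))) y = peval (pdiff k (pdiff i (pdiff i L))) y" for i y
  proof -
    have "peval (pdiff i (pdiff i (pdiff k L))) y = peval (pdiff i (pdiff k (pdiff i L))) y"
      by (rule peval_pdiff_cong) (rule pdiff_pdiff_commute)
    also have "\<dots> = peval (pdiff k (pdiff i (pdiff i L))) y" by (rule pdiff_pdiff_commute)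
    finally show ?thesis .
  qed
  obtain xs where xs: "set xs = (UNIV :: 'm set)" "distinct xs"
    using finite_distinct_list[of "UNIV :: 'm set"] by auto
  define Lap where "Lap = concat (map (\<lambda>i. pdiff i (pdiff i L)) xs)"
  have "peval Lap z = (\<Sum>i\<in>UNIV. peval (pdiff i (pdiff i L)) z)" for z
    unfolding Lap_def peval_concat using xs by (simp add: sum_list_distinct_conv_sum_set)
  then have "peval (pdiff k Lap) y = peval (pdiff k []) y" for y
    using L unfolding harmonic_terms_def by (intro peval_pdiff_cong) simp
  moreover have "peval (pdiff k Lap) y = (\<Sum>i\<in>UNIV. peval (pdiff k (pdiff i (pdiff i L))) y)" for y
    unfolding Lap_def pdiff_concat peval_concat using xs by (simp add: sum_list_distinct_conv_sum_set)
  ultimately show ?thesis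
    using L homogeneous_terms_pdiff unfolding harmonic_terms_def commute by auto
qed

subsection \<open>Angular momentum on the sphere\<close>

lemma tangent_line_nonzero:
  fixes y v :: "'a::real_inner"
  assumes "norm y = 1" "y \<bullet> v = 0"
  shows "y + t *\<^sub>R v \<noteq> 0"
proof
  assume "y + t *\<^sub>R v = 0"
  then have "y \<bullet> (y + t *\<^sub>R v) = 0" by simp
  then show False using assms by (simp add: inner_add_right dot_square_norm)
qed

text \<open>The norm is stationary at \<open>t = 0\<close> because \<open>v \<bottom> y\<close>.\<close>

lemma has_derivative_normalized_tangent_line:
  fixes y v :: "'a::real_inner"
  assumes y: "norm y = 1" and yv: "y \<bullet> v = 0"
  shows "((\<lambda>t. (1 / norm (y + t *\<^sub>R v)) *\<^sub>R (y + t *\<^sub>R v)) has_derivative (\<lambda>h. h *\<^sub>R v)) (at 0)"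
proof -
  have line: "((\<lambda>t. y + t *\<^sub>R v) has_derivative (\<lambda>h. h *\<^sub>R v)) (at 0)"
    by (auto intro!: derivative_eq_intros)
  have "y \<noteq> 0" "sgn y = y" using y by (auto simp: sgn_div_norm)
  then have "((\<lambda>t. norm (y + t *\<^sub>R v)) has_derivative (\<lambda>h. 0)) (at 0)"
    using has_derivative_compose[OF line, of norm "\<lambda>h. h \<bullet> sgn y"] has_derivative_norm[of y] yv
    by (simp add: inner_commute)
  then have inv: "((\<lambda>t. inverse (norm (y + t *\<^sub>R v))) has_derivative (\<lambda>h. 0)) (at 0)"
    using Deriv.has_derivative_inverse[of "\<lambda>t. norm (y + t *\<^sub>R v)" 0] y by fastforce
  show ?thesis
    using has_derivative_scaleR[OF inv line] y by (simp add: divide_inverse)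
qed

definition rot_terms :: "'m::finite \<Rightarrow> 'm \<Rightarrow> 'm poly_terms \<Rightarrow> 'm poly_terms" where
  "rot_terms k j L = pmult_coord k (pdiff j L) @ psmult (-1) (pmult_coord j (pdiff k L))"

lemma peval_rot_terms:
  "peval (rot_terms k j L) y = complex_of_real (y$k) * peval (pdiff j L) y - complex_of_real (y$j) * peval (pdiff k L) y"
  by (simp add: rot_terms_def)

lemma Ltil_peval:
  fixes y :: "real^'m::finite"
  assumes y: "norm y = 1" and f: "\<And>z. norm z = 1 \<Longrightarrow> f z = peval L z"
  shows "Ltil k j f y = peval (rot_terms k j L) y"
proof -
  define v :: "real^'m" where "v = (\<chi> i. (if i = j then y$k else 0) - (if i = k then y$j else 0))"
  define g where "g t = (1 / norm (y + t *\<^sub>R v)) *\<^sub>R (y + t *\<^sub>R v)" for t :: real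
  have "y$i * v$i = (if i = j then y$j * y$k else 0) - (if i = k then y$k * y$j else 0)" for i
    by (simp add: v_def)
  then have yv: "y \<bullet> v = 0"
    unfolding inner_vec_def by (simp add: sum_subtractf)
  have "norm (g t) = 1" for t
    using tangent_line_nonzero[OF y yv] unfolding g_def by simp
  then have Ltil_g: "Ltil k j f y = vector_derivative (\<lambda>t. peval L (g t)) (at 0)"
    unfolding Ltil_def Let_def v_def[symmetric] g_def[symmetric] by (simp add: f)
  have "g 0 = y" unfolding g_def using y by simp
  then have "((\<lambda>t. peval L (g t)) has_derivative
      (\<lambda>h. \<Sum>i\<in>UNIV. complex_of_real ((h *\<^sub>R v)$i) * peval (pdiff i L) y)) (at 0)"
    using has_derivative_compose[OF has_derivative_normalized_tangent_line[OF y yv] has_derivative_peval]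
    unfolding g_def by simp
  then have "((\<lambda>t. peval L (g t)) has_vector_derivative
      (\<Sum>i\<in>UNIV. complex_of_real (v$i) * peval (pdiff i L) y)) (at 0)"
    unfolding has_vector_derivative_def
    by (simp add: scaleR_conv_of_real[where 'a = complex] sum_distrib_left algebra_simps)
  then have "Ltil k j f y = (\<Sum>i\<in>UNIV. complex_of_real (v$i) * peval (pdiff i L) y)"
    unfolding Ltil_g by (rule vector_derivative_at)
  also have "\<dots> = peval (rot_terms k j L) y"
  proof -
    have "complex_of_real (v$i) * peval (pdiff i L) y =
        (if i = j then complex_of_real (y$k) * peval (pdiff j L) y else 0)
        - (if i = k then complex_of_real (y$j) * peval (pdiff k L) y else 0)" for i
      by (simp add: v_def left_diff_distrib)
    then show ?thesis by (simp add: peval_rot_terms sum_subtractf)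
  qed
  finally show ?thesis .
qed

definition angular_laplacian :: "'m::finite poly_terms \<Rightarrow> real^'m \<Rightarrow> complex" where
  "angular_laplacian L y = (\<Sum>k\<in>UNIV. \<Sum>j\<in>UNIV. peval (rot_terms k j (rot_terms k j L)) y)"

lemma peval_pdiff_rot_terms:
  "peval (pdiff i (rot_terms k j L)) y =
     (if i = k then peval (pdiff j L) y else 0) + complex_of_real (y$k) * peval (pdiff i (pdiff j L)) y
     - ((if i = j then peval (pdiff k L) y else 0) + complex_of_real (y$j) * peval (pdiff i (pdiff k L)) y)"
  by (simp add: rot_terms_def peval_pdiff_psmult peval_pdiff_pmult_coord)

lemma angular_laplacian_Nil: "angular_laplacian [] y = 0"
  by (simp add: angular_laplacian_def rot_terms_def)

lemma angular_laplacian_append: "angular_laplacian (A @ B) y = angular_laplacian A y + angular_laplacian B y"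
proof -
  have "peval (rot_terms k j (rot_terms k j (A @ B))) y =
      peval (rot_terms k j (rot_terms k j A)) y + peval (rot_terms k j (rot_terms k j B)) y" for k j
    unfolding peval_rot_terms peval_pdiff_rot_terms by (simp add: algebra_simps)
  then show ?thesis
    unfolding angular_laplacian_def by (simp add: sum.distrib)
qed

lemma angular_laplacian_concat:
  "angular_laplacian (concat (map Ls xs)) y = (\<Sum>x\<leftarrow>xs. angular_laplacian (Ls x) y)"
  by (induction xs) (simp_all add: angular_laplacian_Nil angular_laplacian_append)

lemma Ltil_Ltil_sum_peval:
  fixes y :: "real^'m::finite"
  assumes y: "norm y = 1" and g: "\<And>z. norm z = 1 \<Longrightarrow> g z = peval L z"
  shows "(\<Sum>k\<in>UNIV. \<Sum>j\<in>UNIV. Ltil k j (Ltil k j g) y) = angular_laplacian L y"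
proof -
  have "Ltil k j (Ltil k j g) y = peval (rot_terms k j (rot_terms k j L)) y" for k j
    by (rule Ltil_peval[OF y]) (rule Ltil_peval[OF _ g])
  then show ?thesis unfolding angular_laplacian_def by simp
qed

subsection \<open>Independence of spherical harmonics of distinct degrees\<close>

definition sph_eigenvalue :: "nat \<Rightarrow> nat \<Rightarrow> real" where
  "sph_eigenvalue d l = - 2 * real l * (real l + real d - 2)"

text \<open>Each summand is \<open>f k j + f j k\<close> for the \<open>f\<close> below (using \<open>\<partial>\<^sub>j\<partial>\<^sub>k = \<partial>\<^sub>k\<partial>\<^sub>j\<close>), and the four
  parts of \<open>\<Sum> f\<close> are evaluated by harmonicity and by Euler's identity for \<open>L\<close> and \<open>\<partial>\<^sub>k L\<close>.\<close>

lemma angular_laplacian_harmonic: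
  fixes y :: "real^'m::finite"
  assumes L: "harmonic_terms l L"
  shows "angular_laplacian L y = complex_of_real (sph_eigenvalue CARD('m) l) * peval L y"
proof -
  define Y where "Y a = complex_of_real (y$a)" for a
  define D where "D a = peval (pdiff a L) y" for a
  define P where "P a b = peval (pdiff a (pdiff b L)) y" for a b
  define E where "E = of_nat l * peval L y"
  define f where "f k j = (if j = k then Y k * D j else 0) + Y k * Y k * P j j - Y k * D k - Y k * Y j * P j k"
    for k j
  have lap: "(\<Sum>j\<in>UNIV. P j j) = 0"
    using L unfolding harmonic_terms_def P_def by simp
  have euler: "(\<Sum>j\<in>UNIV. Y j * D j) = E"
    using L euler_identity[of l L y] unfolding harmonic_terms_def Y_def D_def E_def by simp
  have euler_pdiff: "(\<Sum>j\<in>UNIV. Y j * P j k) = of_nat (l - 1) * D k" for k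
    using L euler_identity[of "l - 1" "pdiff k L" y] homogeneous_terms_pdiff[of l L k]
    unfolding harmonic_terms_def Y_def D_def P_def by simp
  have summand: "peval (rot_terms k j (rot_terms k j L)) y = f k j + f j k" for k j
    unfolding peval_rot_terms peval_pdiff_rot_terms f_def Y_def[symmetric] D_def[symmetric] P_def[symmetric]
    using pdiff_pdiff_commute[of j k L y] by (simp add: P_def algebra_simps)
  have "(\<Sum>k\<in>UNIV. \<Sum>j\<in>UNIV. Y k * Y k * P j j) = 0"
    by (simp add: lap flip: sum_distrib_left)
  moreover have "(\<Sum>k\<in>UNIV. \<Sum>j\<in>UNIV. Y k * Y j * P j k) = of_nat (l - 1) * E"
  proof -
    have "(\<Sum>k\<in>UNIV. \<Sum>j\<in>UNIV. Y k * Y j * P j k) = (\<Sum>k\<in>UNIV. Y k * (\<Sum>j\<in>UNIV. Y j * P j k))"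
      by (simp add: sum_distrib_left mult.assoc)
    also have "\<dots> = of_nat (l - 1) * (\<Sum>k\<in>UNIV. Y k * D k)"
      by (simp add: euler_pdiff sum_distrib_left algebra_simps)
    finally show ?thesis by (simp add: euler)
  qed
  moreover have "(\<Sum>k\<in>(UNIV::'m set). \<Sum>j\<in>(UNIV::'m set). Y k * D k) = of_nat CARD('m) * E"
    by (simp add: euler flip: sum_distrib_left)
  ultimately have "(\<Sum>k\<in>UNIV. \<Sum>j\<in>UNIV. f k j) = E - of_nat CARD('m) * E - of_nat (l - 1) * E"
    unfolding f_def by (simp add: sum.distrib sum_subtractf euler)
  then have "angular_laplacian L y = 2 * (E - of_nat CARD('m) * E - of_nat (l - 1) * E)"
    unfolding angular_laplacian_def summand sum.distrib by (subst (2) sum.swap) simp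
  then show ?thesis
    unfolding E_def sph_eigenvalue_def by (cases l) (simp_all add: algebra_simps)
qed

lemma sph_eigenvalue_strict_antimono:
  assumes "d \<ge> 2" "a < b"
  shows "sph_eigenvalue d b < sph_eigenvalue d a"
proof -
  have "real a * (real a + real d - 2) \<le> real a * (real b + real d - 2)"
    using assms by (intro mult_left_mono) auto
  also have "\<dots> < real b * (real b + real d - 2)"
    using assms by (intro mult_strict_right_mono) auto
  finally have "real a * (real a + real d - 2) < real b * (real b + real d - 2)" .
  then show ?thesis unfolding sph_eigenvalue_def by simp
qed

lemma sph_eigenvalue_eq_iff: "d \<ge> 2 \<Longrightarrow> sph_eigenvalue d a = sph_eigenvalue d b \<longleftrightarrow> a = b"
  by (metis linorder_neqE_nat order_less_irrefl sph_eigenvalue_strict_antimono)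

lemma eigen_weighted_sum_vanishing_on_sphere:
  fixes Ls :: "nat \<Rightarrow> 'm::finite poly_terms" and y :: "real^'m"
  assumes S: "finite S" and harm: "\<forall>k\<in>S. harmonic_terms k (Ls k)"
    and zero: "\<forall>z::real^'m. norm z = 1 \<longrightarrow> (\<Sum>k\<in>S. peval (Ls k) z) = 0" and y: "norm y = 1"
  shows "(\<Sum>k\<in>S. complex_of_real (sph_eigenvalue CARD('m) k) * peval (Ls k) y) = 0"
proof -
  obtain xs where xs: "set xs = S" "distinct xs"
    using finite_distinct_list[OF S] by blast
  define Sum_terms where "Sum_terms = concat (map Ls xs)"
  have "peval Sum_terms z = (\<Sum>k\<in>S. peval (Ls k) z)" for z
    using xs by (simp add: Sum_terms_def peval_concat sum_list_distinct_conv_sum_set)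
  then have "angular_laplacian Sum_terms y = angular_laplacian [] y"
    using Ltil_Ltil_sum_peval[OF y, of "peval Sum_terms" Sum_terms]
      Ltil_Ltil_sum_peval[OF y, of "peval Sum_terms" "[]"] zero by simp
  moreover have "angular_laplacian Sum_terms y = (\<Sum>k\<in>S. angular_laplacian (Ls k) y)"
    using xs by (simp add: Sum_terms_def angular_laplacian_concat sum_list_distinct_conv_sum_set)
  moreover have "(\<Sum>k\<in>S. angular_laplacian (Ls k) y) =
      (\<Sum>k\<in>S. complex_of_real (sph_eigenvalue CARD('m) k) * peval (Ls k) y)"
    using harm by (intro sum.cong refl) (simp add: angular_laplacian_harmonic)
  ultimately show ?thesis
    by (simp add: angular_laplacian_Nil)
qed

lemma harmonic_terms_sum_vanishing_on_sphere:
  fixes Ls :: "nat \<Rightarrow> 'm::finite poly_terms"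
  assumes N: "CARD('m) \<ge> 2" and S: "finite S" and harm: "\<forall>k\<in>S. harmonic_terms k (Ls k)"
    and zero: "\<forall>y::real^'m. norm y = 1 \<longrightarrow> (\<Sum>k\<in>S. peval (Ls k) y) = 0"
  shows "\<forall>k\<in>S. \<forall>y::real^'m. norm y = 1 \<longrightarrow> peval (Ls k) y = 0"
  using S harm zero
proof (induction S arbitrary: Ls rule: finite_induct)
  case empty
  then show ?case by simp
next
  case (insert a S)
  define lam where "lam k = complex_of_real (sph_eigenvalue CARD('m) k)" for k
  define Ls' where "Ls' k = psmult (lam k - lam a) (Ls k)" for k
  have "\<forall>k\<in>S. harmonic_terms k (Ls' k)"
    using insert.prems(1) by (simp add: Ls'_def harmonic_terms_psmult)
  moreover have "\<forall>y::real^'m. norm y = 1 \<longrightarrow> (\<Sum>k\<in>S. peval (Ls' k) y) = 0"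
  proof (intro allI impI)
    fix y :: "real^'m" assume y: "norm y = 1"
    have "(\<Sum>k\<in>S. peval (Ls' k) y) =
        (\<Sum>k\<in>insert a S. lam k * peval (Ls k) y) - lam a * (\<Sum>k\<in>insert a S. peval (Ls k) y)"
      using insert.hyps by (simp add: Ls'_def left_diff_distrib sum_subtractf sum_distrib_left algebra_simps)
    then show "(\<Sum>k\<in>S. peval (Ls' k) y) = 0"
      using eigen_weighted_sum_vanishing_on_sphere[OF _ insert.prems y] insert.prems(2) y insert.hyps(1)
      by (simp add: lam_def)
  qed
  ultimately have "\<forall>k\<in>S. \<forall>y::real^'m. norm y = 1 \<longrightarrow> peval (Ls' k) y = 0"
    by (rule insert.IH)
  then have "\<forall>k\<in>S. \<forall>y::real^'m. norm y = 1 \<longrightarrow> (lam k - lam a) * peval (Ls k) y = 0"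
    by (simp add: Ls'_def)
  moreover have "lam k \<noteq> lam a" if "k \<in> S" for k
    using that insert.hyps(2) sph_eigenvalue_eq_iff[OF N] unfolding lam_def by auto
  ultimately have rest: "\<forall>k\<in>S. \<forall>y::real^'m. norm y = 1 \<longrightarrow> peval (Ls k) y = 0"
    by simp
  then have "\<forall>y::real^'m. norm y = 1 \<longrightarrow> peval (Ls a) y = 0"
    using insert.prems(2) insert.hyps by simp
  with rest show ?case by blast
qed

subsection \<open>Harmonic decomposition and functional calculus\<close>

lemma finite_exponents_of_degree: "finite {m :: 'm::finite \<Rightarrow> nat. sum m UNIV = l}"
proof (rule finite_subset)
  show "{m :: 'm \<Rightarrow> nat. sum m UNIV = l} \<subseteq> Pi\<^sub>E UNIV (\<lambda>_. {..l})"
  proof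
    fix m :: "'m \<Rightarrow> nat" assume "m \<in> {m. sum m UNIV = l}"
    then show "m \<in> Pi\<^sub>E UNIV (\<lambda>_. {..l})"
      using member_le_sum[of _ UNIV m] by (auto simp: PiE_iff)
  qed
qed (simp add: finite_PiE)

lemma homog_poly_zero: "homog_poly l (\<lambda>_. 0)"
  unfolding homog_poly_def by (rule exI[of _ "\<lambda>_. 0"]) simp

lemma homog_poly_add: "homog_poly l p \<Longrightarrow> homog_poly l q \<Longrightarrow> homog_poly l (\<lambda>y. p y + q y)"
proof -
  assume "homog_poly l p" "homog_poly l q"
  then obtain cp cq where
    "\<And>y. p y = (\<Sum>m\<in>{m. sum m UNIV = l}. cp m * (\<Prod>i\<in>UNIV. complex_of_real ((y$i) ^ m i)))"
    "\<And>y. q y = (\<Sum>m\<in>{m. sum m UNIV = l}. cq m * (\<Prod>i\<in>UNIV. complex_of_real ((y$i) ^ m i)))"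
    unfolding homog_poly_def by blast
  then show ?thesis
    unfolding homog_poly_def by (intro exI[of _ "\<lambda>m. cp m + cq m"]) (simp add: distrib_right sum.distrib)
qed

lemma homog_poly_monomial:
  assumes "sum m UNIV = l"
  shows "homog_poly l (\<lambda>y. c * monomial m y)"
proof -
  have "(if \<mu> = m then c else 0) * monomial \<mu> y = (if \<mu> = m then c * monomial m y else 0)" for \<mu> y
    by simp
  then have "c * monomial m y = (\<Sum>\<mu>\<in>{m. sum m UNIV = l}. (if \<mu> = m then c else 0) * monomial \<mu> y)" for y
    using assms by (simp add: sum.delta[OF finite_exponents_of_degree])
  then show ?thesis
    unfolding homog_poly_def monomial_def[symmetric] by (intro exI[of _ "\<lambda>\<mu>. if \<mu> = m then c else 0"] allI)
qed

lemma homog_poly_peval: "homogeneous_terms l L \<Longrightarrow> homog_poly l (peval L)"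
proof (induction L)
  case Nil
  then show ?case using homog_poly_zero by (simp add: peval_def[abs_def])
next
  case (Cons a L)
  obtain c m where a: "a = (c,m)" by fastforce
  then have "peval (a # L) = (\<lambda>y. c * monomial m y + peval L y)"
    by (simp add: fun_eq_iff)
  then show ?case
    using Cons.prems a homog_poly_add[OF homog_poly_monomial[of m l c] Cons.IH] by simp
qed

lemma homog_poly_imp_peval:
  assumes "homog_poly l p"
  obtains L where "homogeneous_terms l L" "p = peval L"
proof -
  obtain c where c: "\<And>y. p y = (\<Sum>m\<in>{m. sum m UNIV = l}. c m * monomial m y)"
    using assms unfolding homog_poly_def monomial_def[symmetric] by blast
  obtain xs where xs: "set xs = {m :: 'a \<Rightarrow> nat. sum m UNIV = l}" "distinct xs"
    using finite_distinct_list[OF finite_exponents_of_degree] by blast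
  define L where "L = map (\<lambda>m. (c m, m)) xs"
  have "p = peval L"
    unfolding L_def peval_def c using xs by (simp add: o_def sum_list_distinct_conv_sum_set fun_eq_iff)
  moreover have "homogeneous_terms l L"
    using xs unfolding L_def homogeneous_terms_def by auto
  ultimately show ?thesis using that by blast
qed

lemma harmonic_homog_iff: "harmonic_homog l p \<longleftrightarrow> (\<exists>L. harmonic_terms l L \<and> p = peval L)"
proof
  assume "harmonic_homog l p"
  then obtain L where "homogeneous_terms l L" "p = peval L" "\<forall>y. laplacian p y = 0"
    unfolding harmonic_homog_def by (metis homog_poly_imp_peval)
  then show "\<exists>L. harmonic_terms l L \<and> p = peval L"
    unfolding harmonic_terms_def by (metis laplacian_peval)
next
  assume "\<exists>L. harmonic_terms l L \<and> p = peval L"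
  then show "harmonic_homog l p"
    unfolding harmonic_homog_def harmonic_terms_def by (metis homog_poly_peval laplacian_peval)
qed

lemma SH_iff: "f \<in> SH l \<longleftrightarrow> (\<exists>L. harmonic_terms l L \<and> f = restr (peval L))"
  unfolding SH_def harmonic_homog_iff by blast

lemma zero_in_SH: "(\<lambda>_. 0) \<in> SH l"
  unfolding SH_iff by (rule exI[of _ "[]"]) (simp add: harmonic_terms_Nil restr_def fun_eq_iff)

lemma is_harm_decomp_sum:
  assumes c: "is_harm_decomp g c" and S: "finite S" "{k. c k \<noteq> (\<lambda>_. 0)} \<subseteq> S" and y: "norm y = 1"
  shows "(\<Sum>k\<in>S. c k y) = g y"
proof -
  have "(\<Sum>k\<in>S. c k y) = (\<Sum>k\<in>{k. c k \<noteq> (\<lambda>_. 0)}. c k y)"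
    using S by (intro sum.mono_neutral_right) auto
  then show ?thesis using c y unfolding is_harm_decomp_def by simp
qed

lemma is_harm_decomp_unique:
  assumes N: "CARD('m::finite) \<ge> 2"
    and c: "is_harm_decomp (g :: real^'m \<Rightarrow> complex) c" and d: "is_harm_decomp g d"
  shows "c = d"
proof -
  have "\<forall>k. \<exists>L. harmonic_terms k L \<and> c k = restr (peval L)"
    using c SH_iff unfolding is_harm_decomp_def by blast
  then obtain Lc where Lc: "\<And>k. harmonic_terms k (Lc k) \<and> c k = restr (peval (Lc k))"
    by metis
  have "\<forall>k. \<exists>L. harmonic_terms k L \<and> d k = restr (peval L)"
    using d SH_iff unfolding is_harm_decomp_def by blast
  then obtain Ld where Ld: "\<And>k. harmonic_terms k (Ld k) \<and> d k = restr (peval (Ld k))"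
    by metis
  define S where "S = {k. c k \<noteq> (\<lambda>_. 0)} \<union> {k. d k \<noteq> (\<lambda>_. 0)}"
  have S: "finite S" using c d unfolding S_def is_harm_decomp_def by simp
  define Ls where "Ls k = Lc k @ psmult (-1) (Ld k)" for k
  have peval_Ls: "peval (Ls k) y = c k y - d k y" if "norm y = 1" for k y
    using Lc[of k] Ld[of k] that by (simp add: Ls_def restr_def)
  have "\<forall>k\<in>S. harmonic_terms k (Ls k)"
    using Lc Ld harmonic_terms_append harmonic_terms_psmult unfolding Ls_def by blast
  moreover have "\<forall>y::real^'m. norm y = 1 \<longrightarrow> (\<Sum>k\<in>S. peval (Ls k) y) = 0"
  proof (intro allI impI)
    fix y :: "real^'m" assume y: "norm y = 1"
    have "(\<Sum>k\<in>S. c k y) = g y" "(\<Sum>k\<in>S. d k y) = g y"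
      by (rule is_harm_decomp_sum[OF c S _ y] is_harm_decomp_sum[OF d S _ y]; auto simp: S_def)+
    then show "(\<Sum>k\<in>S. peval (Ls k) y) = 0"
      using peval_Ls[OF y] by (simp add: sum_subtractf)
  qed
  ultimately have "\<forall>k\<in>S. \<forall>y::real^'m. norm y = 1 \<longrightarrow> peval (Ls k) y = 0"
    by (rule harmonic_terms_sum_vanishing_on_sphere[OF N S])
  then have "c k y = d k y" if "k \<in> S" for k y
  proof (cases "norm y = 1")
    case False
    then show ?thesis using Lc[of k] Ld[of k] by (simp add: restr_def)
  qed (use that peval_Ls[of y k] in auto)
  moreover have "c k = d k" if "k \<notin> S" for k
    using that unfolding S_def by auto
  ultimately show "c = d" by (intro ext) metis
qed

lemma harm_comp_harmonic:
  assumes N: "CARD('m::finite) \<ge> 2" and M: "harmonic_terms l M"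
    and g: "\<And>y. norm y = 1 \<Longrightarrow> (g :: real^'m \<Rightarrow> complex) y = peval M y"
  shows "harm_comp g = (\<lambda>k. if k = l then restr (peval M) else (\<lambda>_. 0))"
  unfolding harm_comp_def
proof (rule the_equality)
  define c where "c = (\<lambda>k. if k = l then restr (peval M) else (\<lambda>_::real^'m. 0::complex))"
  have "{k. c k \<noteq> (\<lambda>_. 0)} = (if restr (peval M) = (\<lambda>_. 0) then {} else {l})"
    unfolding c_def by auto
  moreover have "g y = restr (peval M) y" if "norm y = 1" for y
    using g[OF that] that by (simp add: restr_def)
  moreover have "c k \<in> SH k" for k
    unfolding c_def using M SH_iff zero_in_SH by auto
  ultimately show "is_harm_decomp g c"
    unfolding is_harm_decomp_def by (auto simp: c_def)
  then show "d = c" if "is_harm_decomp g d" for d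
    using is_harm_decomp_unique[OF N that] by blast
qed

lemma fcalc_harmonic:
  assumes N: "CARD('m::finite) \<ge> 2" and M: "harmonic_terms l M"
    and g: "\<And>y. norm y = 1 \<Longrightarrow> (g :: real^'m \<Rightarrow> complex) y = peval M y"
  shows "fcalc phi g = (\<lambda>y. phi ((real l + (dimS TYPE('m) - 1) / 2)\<^sup>2) * restr (peval M) y)"
proof (cases "restr (peval M) = (\<lambda>_. 0)")
  case True
  then have "{k. harm_comp g k \<noteq> (\<lambda>_. 0)} = {}"
    using harm_comp_harmonic[OF assms] by auto
  then show ?thesis using True unfolding fcalc_def by simp
next
  case False
  then have "{k. harm_comp g k \<noteq> (\<lambda>_. 0)} = {l}"
    using harm_comp_harmonic[OF assms] by auto
  then show ?thesis using harm_comp_harmonic[OF assms] unfolding fcalc_def by simp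
qed

subsection \<open>The operator \<open>A\<^sub>k\<close> on harmonic polynomials\<close>

lemma pdiff_homogeneous_zero: "homogeneous_terms 0 L \<Longrightarrow> pdiff k L = []"
  by (induction L) auto

lemma harmonic_terms_homogeneous_zero: "homogeneous_terms 0 L \<Longrightarrow> harmonic_terms 0 L"
  by (simp add: harmonic_terms_def pdiff_homogeneous_zero)

lemma sum_coord_Ltil_homogeneous:
  fixes y :: "real^'m::finite"
  assumes L: "homogeneous_terms l L" and f: "\<And>z. norm z = 1 \<Longrightarrow> f z = peval L z" and y: "norm y = 1"
  shows "(\<Sum>j\<in>UNIV. complex_of_real (y$j) * Ltil k j f y) =
    complex_of_real (y$k) * of_nat l * peval L y - peval (pdiff k L) y"
proof -
  have "(\<Sum>j\<in>UNIV. complex_of_real (y$j) * complex_of_real (y$j)) = complex_of_real (y \<bullet> y)"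
    by (simp add: inner_vec_def)
  also have "\<dots> = 1" using y by (simp add: dot_square_norm)
  finally have sphere: "(\<Sum>j\<in>UNIV. complex_of_real (y$j) * complex_of_real (y$j)) = 1" .
  have "(\<Sum>j\<in>UNIV. complex_of_real (y$j) * Ltil k j f y) =
      complex_of_real (y$k) * (\<Sum>j\<in>UNIV. complex_of_real (y$j) * peval (pdiff j L) y)
      - (\<Sum>j\<in>UNIV. complex_of_real (y$j) * complex_of_real (y$j)) * peval (pdiff k L) y"
    by (simp add: Ltil_peval[OF y f] peval_rot_terms right_diff_distrib sum_subtractf
        sum_distrib_left sum_distrib_right algebra_simps)
  then show ?thesis
    unfolding euler_identity[OF L] sphere by (simp add: algebra_simps)
qed

lemma opN_harmonic:
  assumes N: "CARD('m::finite) \<ge> 2" and L: "harmonic_terms l L"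
    and f: "\<And>z. norm z = 1 \<Longrightarrow> (f :: real^'m \<Rightarrow> complex) z = peval L z" and y: "norm y = 1"
  shows "opN hbar f y = complex_of_real (hbar * real l) * peval L y"
proof -
  have "sqrt ((real l + (dimS TYPE('m) - 1) / 2)\<^sup>2) - (dimS TYPE('m) - 1) / 2 = real l"
    using N by (simp add: dimS_def)
  then show ?thesis
    using y by (simp add: opN_def fcalc_harmonic[OF N L] f restr_def)
qed

lemma opE_harmonic:
  assumes N: "CARD('m::finite) \<ge> 2" and L: "harmonic_terms l L"
    and f: "\<And>z. norm z = 1 \<Longrightarrow> (f :: real^'m \<Rightarrow> complex) z = peval L z" and y: "norm y = 1"
  shows "opE hbar k f y = complex_of_real hbar * peval (pdiff k L) y"
proof -
  have "(\<Sum>j\<in>UNIV. (- \<i> * complex_of_real (y$j)) * (- \<i> * complex_of_real hbar * Ltil k j f y))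
      = - complex_of_real hbar * (\<Sum>j\<in>UNIV. complex_of_real (y$j) * Ltil k j f y)"
    by (simp add: sum_distrib_left algebra_simps)
  also have "\<dots> = - complex_of_real hbar *
      (complex_of_real (y$k) * of_nat l * peval L y - peval (pdiff k L) y)"
    using L unfolding harmonic_terms_def by (simp add: sum_coord_Ltil_homogeneous[OF _ f y])
  finally have "(\<Sum>j\<in>UNIV. (- \<i> * complex_of_real (y$j)) * (- \<i> * complex_of_real hbar * Ltil k j f y))
      = - complex_of_real hbar * (complex_of_real (y$k) * of_nat l * peval L y - peval (pdiff k L) y)" .
  moreover have "opN hbar f y = complex_of_real (hbar * real l) * peval L y"
    by (rule opN_harmonic[OF N L f y])
  ultimately show ?thesis
    unfolding opE_def by (simp add: algebra_simps)
qed

definition opM_symbol :: "real \<Rightarrow> nat \<Rightarrow> real" where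
  "opM_symbol n l = sqrt (2 / (n - 1)) * ((real l + (n - 1) / 2)\<^sup>2) powr (1/4)"

text \<open>For \<open>l = 0\<close> the truncated \<open>l - 1\<close> is harmless, as \<open>pdiff k L\<close> then evaluates to \<open>0\<close>.\<close>

lemma opA_harmonic:
  assumes N: "CARD('m::finite) \<ge> 2" and L: "harmonic_terms l L"
    and f: "\<And>z. norm z = 1 \<Longrightarrow> (f :: real^'m \<Rightarrow> complex) z = peval L z"
  shows "opA hbar k f = (\<lambda>y. complex_of_real
      (hbar * opM_symbol (dimS TYPE('m)) (l - 1) / opM_symbol (dimS TYPE('m)) l) * restr (peval (pdiff k L)) y)"
proof -
  define a where "a = complex_of_real (1 / opM_symbol (dimS TYPE('m)) l)"
  have Minv: "opMinv f z = peval (psmult a L) z" if "norm z = 1" for z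
    using that by (simp add: opMinv_def fcalc_harmonic[OF N L] f a_def opM_symbol_def restr_def)
  have "opE hbar k (opMinv f) y = peval (psmult (complex_of_real hbar * a) (pdiff k L)) y" if "norm y = 1" for y
    using opE_harmonic[OF N harmonic_terms_psmult[OF L] Minv that] by (simp add: peval_pdiff_psmult)
  moreover have "harmonic_terms (l - 1) (psmult (complex_of_real hbar * a) (pdiff k L))"
    by (intro harmonic_terms_psmult harmonic_terms_pdiff L)
  ultimately show ?thesis
    unfolding opA_def opM_def by (subst fcalc_harmonic[OF N]) (auto simp: a_def opM_symbol_def restr_def fun_eq_iff)
qed

subsection \<open>Powers of isotropic linear forms\<close>

definition pmult_terms :: "'m::finite poly_terms \<Rightarrow> 'm poly_terms \<Rightarrow> 'm poly_terms" where
  "pmult_terms A B = concat (map (\<lambda>(a,m). map (\<lambda>(b,m'). (a * b, \<lambda>i. m i + m' i)) B) A)"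

lemma peval_pmult_terms: "peval (pmult_terms A B) y = peval A y * peval B y"
proof (induction A)
  case (Cons a A)
  obtain c m where a: "a = (c,m)" by fastforce
  have "peval (map (\<lambda>(b,m'). (c * b, \<lambda>i. m i + m' i)) B) y = c * monomial m y * peval B y"
    by (induction B) (auto simp: monomial_add algebra_simps)
  then show ?case using Cons a by (simp add: pmult_terms_def algebra_simps)
qed (simp add: pmult_terms_def)

lemma homogeneous_terms_pmult_terms:
  "homogeneous_terms a A \<Longrightarrow> homogeneous_terms b B \<Longrightarrow> homogeneous_terms (a + b) (pmult_terms A B)"
  unfolding homogeneous_terms_def pmult_terms_def by (fastforce simp: sum.distrib)

definition lin_form :: "complex^'m::finite \<Rightarrow> real^'m \<Rightarrow> complex" where
  "lin_form alpha y = (\<Sum>j\<in>UNIV. alpha$j * complex_of_real (y$j))"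

lemma lin_form_terms: "\<exists>L. homogeneous_terms 1 L \<and> peval L = lin_form (alpha :: complex^'m::finite)"
proof -
  obtain xs where xs: "set xs = (UNIV :: 'm set)" "distinct xs"
    using finite_distinct_list[of "UNIV :: 'm set"] by auto
  define e where "e j = (\<lambda>i. if i = j then 1 else 0 :: nat)" for j :: 'm
  have "monomial (e j) y = complex_of_real (y$j)" for j y
  proof -
    have "monomial (e j) y = (\<Prod>i\<in>UNIV. if i = j then complex_of_real (y$j) else 1)"
      unfolding monomial_def e_def by (intro prod.cong) auto
    then show ?thesis by simp
  qed
  then have "peval (map (\<lambda>j. (alpha$j, e j)) xs) = lin_form alpha"
    unfolding peval_def lin_form_def using xs by (simp add: o_def sum_list_distinct_conv_sum_set fun_eq_iff)
  moreover have "homogeneous_terms 1 (map (\<lambda>j. (alpha$j, e j)) xs)"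
    unfolding homogeneous_terms_def e_def by auto
  ultimately show ?thesis by blast
qed

lemma lin_form_power_terms: "\<exists>L. homogeneous_terms l L \<and> peval L = (\<lambda>y. lin_form alpha y ^ l)"
proof (induction l)
  case 0
  have "peval [(1, \<lambda>_. 0)] = (\<lambda>y. lin_form alpha y ^ 0)" by (simp add: fun_eq_iff)
  then show ?case by (intro exI[of _ "[(1, \<lambda>_. 0)]"]) simp
next
  case (Suc l)
  obtain A where A: "homogeneous_terms 1 A" "peval A = lin_form alpha"
    using lin_form_terms by blast
  obtain B where B: "homogeneous_terms l B" "peval B = (\<lambda>y. lin_form alpha y ^ l)"
    using Suc by blast
  have "homogeneous_terms (Suc l) (pmult_terms A B)"
    using homogeneous_terms_pmult_terms[OF A(1) B(1)] by simp
  moreover have "peval (pmult_terms A B) = (\<lambda>y. lin_form alpha y ^ Suc l)"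
    using A(2) B(2) by (simp add: peval_pmult_terms fun_eq_iff)
  ultimately show ?case by blast
qed

lemma partial_deriv_lin_form_power:
  "partial_deriv (\<lambda>y. lin_form alpha y ^ l) i y = of_nat l * alpha$i * lin_form alpha y ^ (l - 1)"
proof -
  have line: "lin_form alpha (y + t *\<^sub>R axis i 1) = lin_form alpha y + complex_of_real t * alpha$i" for t
  proof -
    have "alpha$j * complex_of_real ((y + t *\<^sub>R axis i 1)$j) =
        alpha$j * complex_of_real (y$j) + (if j = i then complex_of_real t * alpha$i else 0)" for j
      by (simp add: axis_def algebra_simps)
    then show ?thesis by (simp add: lin_form_def sum.distrib)
  qed
  have "((\<lambda>t. (lin_form alpha y + complex_of_real t * alpha$i) ^ l) has_vector_derivative
      of_nat l * alpha$i * lin_form alpha y ^ (l - 1)) (at 0)"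
    unfolding has_vector_derivative_def
    by (auto intro!: derivative_eq_intros simp: scaleR_conv_of_real[where 'a = complex] algebra_simps)
  then show ?thesis
    unfolding partial_deriv_def line by (rule vector_derivative_at)
qed

lemma peval_pdiff_lin_form_power:
  assumes "peval L = (\<lambda>y. lin_form alpha y ^ l)"
  shows "peval (pdiff i L) y = of_nat l * alpha$i * lin_form alpha y ^ (l - 1)"
proof -
  have "peval (pdiff i L) y = partial_deriv (\<lambda>y. lin_form alpha y ^ l) i y"
    using partial_deriv_peval[of L i y] assms by simp
  then show ?thesis by (simp add: partial_deriv_lin_form_power)
qed

lemma harmonic_lin_form_power_terms:
  assumes iso: "(\<Sum>j\<in>UNIV. (alpha$j)\<^sup>2) = 0"
  obtains L where "harmonic_terms l L" "peval L = (\<lambda>y. lin_form alpha y ^ l)"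
proof -
  obtain L where L: "homogeneous_terms l L" "peval L = (\<lambda>y. lin_form alpha y ^ l)"
    using lin_form_power_terms by blast
  obtain L' where L': "peval L' = (\<lambda>y. lin_form alpha y ^ (l - 1))"
    using lin_form_power_terms by blast
  have "peval (pdiff i (pdiff i L)) y = of_nat l * of_nat (l - 1) * (alpha$i)\<^sup>2 * lin_form alpha y ^ (l - 1 - 1)"
    for i y
  proof -
    have "peval (pdiff i (pdiff i L)) y = peval (pdiff i (psmult (of_nat l * alpha$i) L')) y"
      by (rule peval_pdiff_cong) (simp add: peval_pdiff_lin_form_power[OF L(2)] L')
    then show ?thesis
      by (simp add: peval_pdiff_psmult peval_pdiff_lin_form_power[OF L'] power2_eq_square)
  qed
  moreover have "(\<Sum>i\<in>UNIV. of_nat l * of_nat (l - 1) * (alpha$i)\<^sup>2 * lin_form alpha y ^ (l - 1 - 1)) =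
      of_nat l * of_nat (l - 1) * (\<Sum>i\<in>UNIV. (alpha$i)\<^sup>2) * lin_form alpha y ^ (l - 1 - 1)" for y
    by (simp add: sum_distrib_left sum_distrib_right)
  ultimately have "harmonic_terms l L"
    using iso L(1) by (simp add: harmonic_terms_def)
  then show ?thesis using L(2) by (rule that)
qed

lemma power2_powr_quarter:
  assumes "(x::real) > 0"
  shows "(x\<^sup>2) powr (1/4) = sqrt x"
proof -
  have "(x\<^sup>2) powr (1/4) = (x powr real 2) powr (1/4)"
    using powr_realpow[OF assms, of 2] by simp
  also have "\<dots> = x powr (1/2)"
    by (simp add: powr_powr)
  finally show ?thesis
    using assms by (simp add: powr_half_sqrt)
qed

lemma opM_symbol_ratio:
  assumes n: "n \<ge> 2" and l: "l \<ge> 1"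
  shows "opM_symbol n (l - 1) / opM_symbol n l = sqrt ((2 * (real l - 1) + n - 1) / (2 * real l + n - 1))"
proof -
  have pos: "real k + (n - 1) / 2 > 0" for k :: nat
    using n by (simp add: add_nonneg_pos)
  have "opM_symbol n (l - 1) / opM_symbol n l = sqrt ((real (l - 1) + (n - 1) / 2) / (real l + (n - 1) / 2))"
    using n pos[of l] pos[of "l - 1"]
    by (simp add: opM_symbol_def power2_powr_quarter real_sqrt_divide)
  also have "(real (l - 1) + (n - 1) / 2) / (real l + (n - 1) / 2) = (2 * (real l - 1) + n - 1) / (2 * real l + n - 1)"
    using l pos[of l] by (simp add: field_simps of_nat_diff)
  finally show ?thesis .
qed

lemma opA_lin_form_power:
  fixes alpha :: "complex^'m::finite" and y :: "real^'m"
  assumes N: "CARD('m) \<ge> 3" and iso: "(\<Sum>j\<in>UNIV. (alpha$j)\<^sup>2) = 0" and l: "l \<ge> 1" and y: "norm y = 1"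
  shows "opA hbar k (\<lambda>x. lin_form alpha x ^ l) y =
    complex_of_real (hbar * real l * sqrt ((2 * (real l - 1) + dimS TYPE('m) - 1) / (2 * real l + dimS TYPE('m) - 1)))
    * alpha$k * lin_form alpha y ^ (l - 1)"
proof -
  obtain L where L: "harmonic_terms l L" "peval L = (\<lambda>y. lin_form alpha y ^ l)"
    using harmonic_lin_form_power_terms[OF iso] by blast
  have n: "dimS TYPE('m) \<ge> 2" using N by (simp add: dimS_def)
  have ratio: "hbar * opM_symbol (dimS TYPE('m)) (l - 1) / opM_symbol (dimS TYPE('m)) l =
      hbar * sqrt ((2 * (real l - 1) + dimS TYPE('m) - 1) / (2 * real l + dimS TYPE('m) - 1))"
    using opM_symbol_ratio[OF n l] by (simp flip: times_divide_eq_right)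
  have "opA hbar k (\<lambda>x. lin_form alpha x ^ l) = (\<lambda>y. complex_of_real
      (hbar * sqrt ((2 * (real l - 1) + dimS TYPE('m) - 1) / (2 * real l + dimS TYPE('m) - 1)))
      * restr (peval (pdiff k L)) y)"
    unfolding ratio[symmetric] by (rule opA_harmonic) (use N L in auto)
  then show ?thesis
    using y by (simp add: restr_def peval_pdiff_lin_form_power[OF L(2)] algebra_simps)
qed

lemma opA_homogeneous_zero:
  assumes N: "CARD('m::finite) \<ge> 2" and L: "homogeneous_terms 0 L"
    and f: "\<And>z. norm z = 1 \<Longrightarrow> (f :: real^'m \<Rightarrow> complex) z = peval L z"
  shows "opA hbar k f = (\<lambda>_. 0)"
proof -
  have "opA hbar k f = (\<lambda>y. complex_of_real
      (hbar * opM_symbol (dimS TYPE('m)) (0 - 1) / opM_symbol (dimS TYPE('m)) 0) * restr (peval (pdiff k L)) y)"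
    by (rule opA_harmonic[OF N harmonic_terms_homogeneous_zero[OF L] f])
  then show ?thesis
    by (simp add: pdiff_homogeneous_zero[OF L] restr_def fun_eq_iff)
qed

lemma opA_SH:
  assumes N: "CARD('m::finite) \<ge> 2" and f: "f \<in> (SH l :: (real^'m \<Rightarrow> complex) set)"
  shows "opA hbar k f \<in> SH (l - 1)"
proof -
  from f obtain L where L: "harmonic_terms l L" "f = restr (peval L)"
    unfolding SH_iff by blast
  define c where "c = complex_of_real (hbar * opM_symbol (dimS TYPE('m)) (l - 1) / opM_symbol (dimS TYPE('m)) l)"
  have "opA hbar k f = (\<lambda>y. c * restr (peval (pdiff k L)) y)"
    unfolding c_def by (rule opA_harmonic[OF N L(1)]) (simp add: L(2) restr_def)
  also have "\<dots> = restr (peval (psmult c (pdiff k L)))"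
    by (simp add: restr_def fun_eq_iff)
  finally have "opA hbar k f = restr (peval (psmult c (pdiff k L)))" .
  moreover have "harmonic_terms (l - 1) (psmult c (pdiff k L))"
    by (intro harmonic_terms_psmult harmonic_terms_pdiff L(1))
  ultimately show ?thesis
    unfolding SH_iff by (intro exI[of _ "psmult c (pdiff k L)"] conjI)
qed

theorem mainTheorem13:
  fixes alpha :: "complex^'m::finite" and hbar :: real and k :: 'm
  assumes "CARD('m) - 1 \<in> {2, 3, 5}"
    and "hbar > 0"
    and "(\<Sum>j\<in>UNIV. (alpha$j)\<^sup>2) = 0"
  shows "(\<forall>l::nat. l \<ge> 1 \<longrightarrow> (\<forall>y::real^'m. norm y = 1 \<longrightarrow>
            opA hbar k (\<lambda>x. (\<Sum>j\<in>UNIV. alpha$j * complex_of_real (x$j)) ^ l) y =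
            complex_of_real (hbar * real l *
              sqrt ((2 * (real l - 1) + dimS TYPE('m) - 1) / (2 * real l + dimS TYPE('m) - 1))) *
            alpha$k * (\<Sum>j\<in>UNIV. alpha$j * complex_of_real (y$j)) ^ (l - 1)))
       \<and> (\<forall>c::complex. \<forall>y::real^'m. norm y = 1 \<longrightarrow> opA hbar k (\<lambda>x. c) y = 0)
       \<and> (\<forall>l::nat. l > 0 \<longrightarrow> (\<forall>f\<in>(SH l :: (real^'m \<Rightarrow> complex) set). opA hbar k f \<in> SH (l - 1)))
       \<and> (\<forall>f\<in>(SH 0 :: (real^'m \<Rightarrow> complex) set). \<forall>y. norm y = 1 \<longrightarrow> opA hbar k f y = 0)"
proof (intro conjI allI impI ballI)
  have N: "CARD('m) \<ge> 3" using assms(1) by auto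
  then have N2: "CARD('m) \<ge> 2" by simp
  show "opA hbar k (\<lambda>x. (\<Sum>j\<in>UNIV. alpha$j * complex_of_real (x$j)) ^ l) y =
      complex_of_real (hbar * real l *
        sqrt ((2 * (real l - 1) + dimS TYPE('m) - 1) / (2 * real l + dimS TYPE('m) - 1))) *
      alpha$k * (\<Sum>j\<in>UNIV. alpha$j * complex_of_real (y$j)) ^ (l - 1)"
    if "l \<ge> 1" "norm y = 1" for l y
    using opA_lin_form_power[OF N assms(3) that] unfolding lin_form_def .
  show "opA hbar k (\<lambda>x. c) y = 0" for c y
  proof -
    have "opA hbar k (\<lambda>x. c) = (\<lambda>_. 0)"
      by (rule opA_homogeneous_zero[OF N2, where L = "[(c, \<lambda>_. 0)]"]) simp_all
    then show ?thesis by simp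
  qed
  show "opA hbar k f \<in> SH (l - 1)" if "f \<in> SH l" for l f
    by (rule opA_SH[OF N2 that])
  show "opA hbar k f y = 0" if "f \<in> SH 0" for f y
  proof -
    from that obtain L where L: "harmonic_terms 0 L" "f = restr (peval L)"
      unfolding SH_iff by blast
    have "opA hbar k f = (\<lambda>_. 0)"
      using L(1) unfolding harmonic_terms_def
      by (intro opA_homogeneous_zero[OF N2]) (simp_all add: L(2) restr_def)
    then show ?thesis by simp
  qed
qed

end
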